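(* Let $(\mathcal A,U,\varphi)$ be a sequential formalism and $R\in\mathcal A$. Then: (1) if $\Rsh R$ is trivially inconsistent (i.e. some component of $\Rsh R$ is $\emptyset$), then $R$ is unsatisfiable; (2) if $R$ is satisfiable, then $\Rsh R$ is $\Rsh$-consistent; (3) every satisfiable basic relation is $\Rsh$-consistent.
   Context: A finite non-associative algebra is a tuple $(\mathcal A,\cup,\neg,\emptyset,\mathcal B,\diamond,\overline{\cdot},e)$ where $(\mathcal A,\cup,\neg,\emptyset,\mathcal B)$ is a finite Boolean algebra (with $x\cap y=\neg(\neg x\cup\neg y)$) and for all $x,y,z$: $\overline{\overline x}=x$, $\overline{x\cup y}=\overline x\cup\overline y$, $\overline{x\diamond y}=\overline y\diamond\overline x$, $e\diamond x=x\diamond e=x$, $x\diamond(y\cup z)=(x\diamond y)\cup(x\diamond z)$, $(x\diamond y)\cap\overline z=\emptyset\iff(y\diamond z)\cap\overline x=\emptyset$. $\mathcal B$ is the universal relation; $r\subseteq r'$ means $r\cup r'=r'$; atoms are basic relations. A projection operator from $\mathcal A$ to $\mathcal A'$ is a map $\Rsh$ with $\Rsh(r\cup r')=\Rsh r\cup\Rsh r'$ and $\Rsh\overline r=\overline{\Rsh r}$. A finite multi-algebra is a product $\mathcal A_1\times\cdots\times\mathcal A_m$ of finite non-associative algebras with projection operators $\Rsh_i^j:\mathcal A_i\to\mathcal A_j$ for all distinct $i,j$. Relations $R=(R_1,\dots,R_m)$; basic if all $R_i$ are atoms; universal relation $\mathcal B=(\mathcal B_1,\dots,\mathcal B_m)$;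 operations and $\subseteq$ componentwise; $B\in R$ means $B$ basic, $B\subseteq R$. $R$ is closed under projection if $R_j\subseteq\Rsh_i^jR_i$ for all distinct $i,j$; the projection closure $\Rsh R$ is obtained by repeatedly replacing $R_j$ by $R_j\cap\Rsh_i^jR_i$ until a fixed point. $R$ is $\Rsh$-consistent if it is closed under projection and $R_i\ne\emptyset$ for all $i$. A sequential formalism is $(\mathcal A,U,\varphi)$ with $\mathcal A$ a finite multi-algebra, $U\ne\emptyset$, $\varphi:\mathcal A\to 2^{U\times U}$ satisfying $\varphi(\Rsh R)=\varphi(R)$, $\varphi(\overline R)=\varphi(R)^{-1}$, $\varphi((\emptyset,\dots,\emptyset))=\emptyset$, $\varphi(R\diamond R')\supseteq(\varphi(R)\circ\varphi(R'))\cap\varphi(\mathcal B)$, $\varphi(R\cap R')=\varphi(R)\cap\varphi(R')$, $\varphi(R)=\bigcup_{B\in R}\varphi(B)$. $R$ is satisfiable if $\varphi(R)\ne\emptyset$. *)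

theory Defs
  imports Main
begin

record 'a nalg =
  carrier :: "'a set"
  cup   :: "'a \<Rightarrow> 'a \<Rightarrow> 'a"
  neg   :: "'a \<Rightarrow> 'a"
  emp   :: 'a
  univ  :: 'a
  comp  :: "'a \<Rightarrow> 'a \<Rightarrow> 'a"
  conv  :: "'a \<Rightarrow> 'a"
  ident :: 'a

definition cap :: "'a nalg \<Rightarrow> 'a \<Rightarrow> 'a \<Rightarrow> 'a" where
  "cap A x y = neg A (cup A (neg A x) (neg A y))"

definition subrel :: "'a nalg \<Rightarrow> 'a \<Rightarrow> 'a \<Rightarrow> bool" where
  "subrel A x y \<longleftrightarrow> cup A x y = y"

definition finite_boolean_algebra :: "'a nalg \<Rightarrow> bool" where
  "finite_boolean_algebra A \<longleftrightarrow>
     finite (carrier A) \<and> emp A \<in> carrier A \<and> univ A \<in> carrier A \<and>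
     (\<forall>x\<in>carrier A. neg A x \<in> carrier A) \<and>
     (\<forall>x\<in>carrier A. \<forall>y\<in>carrier A. cup A x y \<in> carrier A) \<and>
     (\<forall>x\<in>carrier A. \<forall>y\<in>carrier A. \<forall>z\<in>carrier A.
        cup A x y = cup A y x \<and> cap A x y = cap A y x \<and>
        cup A x (cup A y z) = cup A (cup A x y) z \<and>
        cap A x (cap A y z) = cap A (cap A x y) z \<and>
        cup A x (cap A x y) = x \<and> cap A x (cup A x y) = x \<and>
        cup A x (cap A y z) = cap A (cup A x y) (cup A x z) \<and>
        cap A x (cup A y z) = cup A (cap A x y) (cap A x z) \<and>
        cup A x (emp A) = x \<and> cap A x (univ A) = x \<and>
        cup A x (neg A x) = univ A \<and> cap A x (neg A x) = emp A)"

definition finite_nalg :: "'a nalg \<Rightarrow> bool" where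
  "finite_nalg A \<longleftrightarrow>
     finite_boolean_algebra A \<and> ident A \<in> carrier A \<and>
     (\<forall>x\<in>carrier A. conv A x \<in> carrier A) \<and>
     (\<forall>x\<in>carrier A. \<forall>y\<in>carrier A. comp A x y \<in> carrier A) \<and>
     (\<forall>x\<in>carrier A. \<forall>y\<in>carrier A. \<forall>z\<in>carrier A.
        conv A (conv A x) = x \<and>
        conv A (cup A x y) = cup A (conv A x) (conv A y) \<and>
        conv A (comp A x y) = comp A (conv A y) (conv A x) \<and>
        comp A (ident A) x = x \<and> comp A x (ident A) = x \<and>
        comp A x (cup A y z) = cup A (comp A x y) (comp A x z) \<and>
        ((cap A (comp A x y) (conv A z) = emp A) \<longleftrightarrow>
         (cap A (comp A y z) (conv A x) = emp A)))"

definition is_atom :: "'a nalg \<Rightarrow> 'a \<Rightarrow> bool" where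
  "is_atom A x \<longleftrightarrow> x \<in> carrier A \<and> x \<noteq> emp A \<and>
     (\<forall>y\<in>carrier A. subrel A y x \<longrightarrow> y = emp A \<or> y = x)"

definition projection_op :: "'a nalg \<Rightarrow> 'a nalg \<Rightarrow> ('a \<Rightarrow> 'a) \<Rightarrow> bool" where
  "projection_op A A' p \<longleftrightarrow>
     (\<forall>r\<in>carrier A. p r \<in> carrier A') \<and>
     (\<forall>r\<in>carrier A. \<forall>r'\<in>carrier A. p (cup A r r') = cup A' (p r) (p r')) \<and>
     (\<forall>r\<in>carrier A. p (conv A r) = conv A' (p r))"

definition multi_algebra :: "nat \<Rightarrow> (nat \<Rightarrow> 'a nalg) \<Rightarrow> (nat \<Rightarrow> nat \<Rightarrow> 'a \<Rightarrow> 'a) \<Rightarrow> bool" where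
  "multi_algebra m A P \<longleftrightarrow>
     (\<forall>i<m. finite_nalg (A i)) \<and>
     (\<forall>i<m. \<forall>j<m. i \<noteq> j \<longrightarrow> projection_op (A i) (A j) (P i j))"

definition is_rel :: "nat \<Rightarrow> (nat \<Rightarrow> 'a nalg) \<Rightarrow> 'a list \<Rightarrow> bool" where
  "is_rel m A R \<longleftrightarrow> length R = m \<and> (\<forall>i<m. R ! i \<in> carrier (A i))"

definition is_basic :: "nat \<Rightarrow> (nat \<Rightarrow> 'a nalg) \<Rightarrow> 'a list \<Rightarrow> bool" where
  "is_basic m A R \<longleftrightarrow> length R = m \<and> (\<forall>i<m. is_atom (A i) (R ! i))"

definition univM :: "nat \<Rightarrow> (nat \<Rightarrow> 'a nalg) \<Rightarrow> 'a list" where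
  "univM m A = map (\<lambda>i. univ (A i)) [0..<m]"

definition empM :: "nat \<Rightarrow> (nat \<Rightarrow> 'a nalg) \<Rightarrow> 'a list" where
  "empM m A = map (\<lambda>i. emp (A i)) [0..<m]"

definition convM :: "nat \<Rightarrow> (nat \<Rightarrow> 'a nalg) \<Rightarrow> 'a list \<Rightarrow> 'a list" where
  "convM m A R = map (\<lambda>i. conv (A i) (R ! i)) [0..<m]"

definition compM :: "nat \<Rightarrow> (nat \<Rightarrow> 'a nalg) \<Rightarrow> 'a list \<Rightarrow> 'a list \<Rightarrow> 'a list" where
  "compM m A R R' = map (\<lambda>i. comp (A i) (R ! i) (R' ! i)) [0..<m]"

definition capM :: "nat \<Rightarrow> (nat \<Rightarrow> 'a nalg) \<Rightarrow> 'a list \<Rightarrow> 'a list \<Rightarrow> 'a list" where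
  "capM m A R R' = map (\<lambda>i. cap (A i) (R ! i) (R' ! i)) [0..<m]"

definition subrelM :: "nat \<Rightarrow> (nat \<Rightarrow> 'a nalg) \<Rightarrow> 'a list \<Rightarrow> 'a list \<Rightarrow> bool" where
  "subrelM m A R R' \<longleftrightarrow> (\<forall>i<m. subrel (A i) (R ! i) (R' ! i))"

definition closed_proj :: "nat \<Rightarrow> (nat \<Rightarrow> 'a nalg) \<Rightarrow> (nat \<Rightarrow> nat \<Rightarrow> 'a \<Rightarrow> 'a) \<Rightarrow> 'a list \<Rightarrow> bool" where
  "closed_proj m A P R \<longleftrightarrow>
     (\<forall>i<m. \<forall>j<m. i \<noteq> j \<longrightarrow> subrel (A j) (R ! j) (P i j (R ! i)))"

definition proj_step :: "nat \<Rightarrow> (nat \<Rightarrow> 'a nalg) \<Rightarrow> (nat \<Rightarrow> nat \<Rightarrow> 'a \<Rightarrow> 'a) \<Rightarrow> 'a list \<Rightarrow> 'a list \<Rightarrow> bool" where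
  "proj_step m A P R S \<longleftrightarrow>
     (\<exists>i<m. \<exists>j<m. i \<noteq> j \<and> S = R[j := cap (A j) (R ! j) (P i j (R ! i))])"

text \<open>The projection closure: the fixed point reached by repeatedly applying steps
  (a fixed point of all steps is exactly a relation closed under projection).\<close>
definition proj_closure :: "nat \<Rightarrow> (nat \<Rightarrow> 'a nalg) \<Rightarrow> (nat \<Rightarrow> nat \<Rightarrow> 'a \<Rightarrow> 'a) \<Rightarrow> 'a list \<Rightarrow> 'a list" where
  "proj_closure m A P R =
     (SOME S. (proj_step m A P)\<^sup>*\<^sup>* R S \<and> (\<forall>S'. proj_step m A P S S' \<longrightarrow> S' = S))"

definition proj_consistent :: "nat \<Rightarrow> (nat \<Rightarrow> 'a nalg) \<Rightarrow> (nat \<Rightarrow> nat \<Rightarrow> 'a \<Rightarrow> 'a) \<Rightarrow> 'a list \<Rightarrow> bool" where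
  "proj_consistent m A P R \<longleftrightarrow> closed_proj m A P R \<and> (\<forall>i<m. R ! i \<noteq> emp (A i))"

definition trivially_inconsistent :: "nat \<Rightarrow> (nat \<Rightarrow> 'a nalg) \<Rightarrow> 'a list \<Rightarrow> bool" where
  "trivially_inconsistent m A R \<longleftrightarrow> (\<exists>i<m. R ! i = emp (A i))"

definition sequential_formalism ::
  "nat \<Rightarrow> (nat \<Rightarrow> 'a nalg) \<Rightarrow> (nat \<Rightarrow> nat \<Rightarrow> 'a \<Rightarrow> 'a) \<Rightarrow> 'u set \<Rightarrow> ('a list \<Rightarrow> ('u \<times> 'u) set) \<Rightarrow> bool" where
  "sequential_formalism m A P U \<phi> \<longleftrightarrow>
     multi_algebra m A P \<and> U \<noteq> {} \<and>
     (\<forall>R. is_rel m A R \<longrightarrow> \<phi> R \<subseteq> U \<times> U) \<and>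
     (\<forall>R. is_rel m A R \<longrightarrow> \<phi> (proj_closure m A P R) = \<phi> R) \<and>
     (\<forall>R. is_rel m A R \<longrightarrow> \<phi> (convM m A R) = (\<phi> R)\<inverse>) \<and>
     \<phi> (empM m A) = {} \<and>
     (\<forall>R R'. is_rel m A R \<longrightarrow> is_rel m A R' \<longrightarrow>
        \<phi> (compM m A R R') \<supseteq> (\<phi> R O \<phi> R') \<inter> \<phi> (univM m A)) \<and>
     (\<forall>R R'. is_rel m A R \<longrightarrow> is_rel m A R' \<longrightarrow>
        \<phi> (capM m A R R') = \<phi> R \<inter> \<phi> R') \<and>
     (\<forall>R. is_rel m A R \<longrightarrow>
        \<phi> R = (\<Union>B\<in>{B. is_basic m A B \<and> subrelM m A B R}. \<phi> B))"

end

theory Submission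
  imports Defs
begin

(* Each projection step intersects one component with a projection of another, so it can only
   shrink the relation. As the algebras are finite, the total number of elements below the
   components strictly decreases along effective steps; hence a stable relation is reached, it
   lies componentwise below R, and stability is exactly closure under projection. The semantics
   is invariant under projection closure, and a relation with an empty component has no basic
   relation below it, so its semantics is empty: this gives (1) and (2). For (3), the closure of a
   satisfiable basic B lies below B and has no empty component, so it equals B, because an atom
   has no nonempty proper subrelation. *)

lemma fba_closed:
  assumes "finite_boolean_algebra A"
  shows fba_finite_carrier: "finite (carrier A)"
    and fba_neg_closed: "x \<in> carrier A \<Longrightarrow> neg A x \<in> carrier A"
    and fba_cup_closed: "x \<in> carrier A \<Longrightarrow> y \<in> carrier A \<Longrightarrow> cup A x y \<in> carrier A"
  using assms unfolding finite_boolean_algebra_def by auto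

lemma fba_cap_closed:
  assumes "finite_boolean_algebra A" "x \<in> carrier A" "y \<in> carrier A"
  shows "cap A x y \<in> carrier A"
  using assms by (simp add: cap_def fba_neg_closed fba_cup_closed)

lemma fba_laws:
  assumes "finite_boolean_algebra A" "x \<in> carrier A" "y \<in> carrier A" "z \<in> carrier A"
  shows fba_cup_commute: "cup A x y = cup A y x"
    and fba_cap_commute: "cap A x y = cap A y x"
    and fba_cup_assoc: "cup A x (cup A y z) = cup A (cup A x y) z"
    and fba_cup_cap_absorb: "cup A x (cap A x y) = x"
    and fba_cap_cup_absorb: "cap A x (cup A x y) = x"
    and fba_cup_emp: "cup A x (emp A) = x"
  using assms unfolding finite_boolean_algebra_def by blast+

lemma subrel_refl:
  assumes "finite_boolean_algebra A" "x \<in> carrier A"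
  shows "subrel A x x"
proof -
  have "cup A x x = cup A x (cap A x (cup A x x))"
    using assms by (simp add: fba_cap_cup_absorb)
  also have "\<dots> = x"
    using assms by (simp add: fba_cup_cap_absorb fba_cup_closed)
  finally show ?thesis unfolding subrel_def .
qed

lemma subrel_trans:
  assumes "finite_boolean_algebra A" "x \<in> carrier A" "y \<in> carrier A" "z \<in> carrier A"
    and "subrel A x y" "subrel A y z"
  shows "subrel A x z"
  using assms fba_cup_assoc[OF assms(1-4)] unfolding subrel_def by simp

lemma subrel_antisym:
  assumes "finite_boolean_algebra A" "x \<in> carrier A" "y \<in> carrier A"
    and "subrel A x y" "subrel A y x"
  shows "x = y"
  using assms fba_cup_commute[OF assms(1-3)] unfolding subrel_def by simp

lemma subrel_emp_iff:
  assumes "finite_boolean_algebra A" "x \<in> carrier A"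
  shows "subrel A x (emp A) \<longleftrightarrow> x = emp A"
  using assms fba_cup_emp[OF assms(1,2,2,2)] unfolding subrel_def by auto

lemma cap_subrel_left:
  assumes "finite_boolean_algebra A" "x \<in> carrier A" "y \<in> carrier A"
  shows "subrel A (cap A x y) x"
  using assms fba_cap_closed[OF assms] fba_cup_cap_absorb[OF assms(1-3,3)]
    fba_cup_commute[of A x "cap A x y"] unfolding subrel_def by simp

lemma subrel_if_cap_eq:
  assumes "finite_boolean_algebra A" "x \<in> carrier A" "y \<in> carrier A"
    and "cap A x y = x"
  shows "subrel A x y"
proof -
  have "cup A x y = cup A y (cap A y x)"
    using assms fba_cap_commute[OF assms(1-3,3)] fba_cap_closed[OF assms(1,3,2)]
      fba_cup_commute[of A y "cap A y x"] by simp
  also have "\<dots> = y"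
    using assms by (simp add: fba_cup_cap_absorb)
  finally show ?thesis unfolding subrel_def .
qed

definition below :: "'a nalg \<Rightarrow> 'a \<Rightarrow> 'a set" where
  "below A x = {y \<in> carrier A. subrel A y x}"

lemma card_below_strict_mono:
  assumes "finite_boolean_algebra A" "x \<in> carrier A" "y \<in> carrier A"
    and "subrel A x y" "x \<noteq> y"
  shows "card (below A x) < card (below A y)"
proof (rule psubset_card_mono)
  show "finite (below A y)"
    using fba_finite_carrier[OF assms(1)] unfolding below_def by simp
  have "below A x \<subseteq> below A y"
    using subrel_trans[OF assms(1)] assms unfolding below_def by blast
  moreover have "y \<in> below A y" "y \<notin> below A x"
    using subrel_refl[OF assms(1,3)] subrel_antisym[OF assms(1-4)] assms(3,5)
    unfolding below_def by auto
  ultimately show "below A x \<subset> below A y" by blast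
qed

lemma multi_algebra_fba:
  assumes "multi_algebra m A P" "i < m"
  shows "finite_boolean_algebra (A i)"
  using assms unfolding multi_algebra_def finite_nalg_def by blast

lemma multi_algebra_proj_closed:
  assumes "multi_algebra m A P" "i < m" "j < m" "i \<noteq> j" "x \<in> carrier (A i)"
  shows "P i j x \<in> carrier (A j)"
  using assms unfolding multi_algebra_def projection_op_def by blast

lemma is_rel_nth:
  assumes "is_rel m A R" "i < m"
  shows "R ! i \<in> carrier (A i)"
  using assms unfolding is_rel_def by blast

lemma is_rel_if_basic:
  assumes "is_basic m A B"
  shows "is_rel m A B"
  using assms unfolding is_basic_def is_rel_def is_atom_def by blast

lemma subrelM_refl:
  assumes "multi_algebra m A P" "is_rel m A R"
  shows "subrelM m A R R"
  unfolding subrelM_def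
  using subrel_refl[OF multi_algebra_fba[OF assms(1)] is_rel_nth[OF assms(2)]] by blast

lemma subrelM_trans:
  assumes "multi_algebra m A P" "is_rel m A R" "is_rel m A S" "is_rel m A T"
    and "subrelM m A R S" "subrelM m A S T"
  shows "subrelM m A R T"
  unfolding subrelM_def
proof (intro allI impI)
  fix i assume i: "i < m"
  show "subrel (A i) (R ! i) (T ! i)"
    using subrel_trans[OF multi_algebra_fba[OF assms(1) i] is_rel_nth[OF assms(2) i]
        is_rel_nth[OF assms(3) i] is_rel_nth[OF assms(4) i]] assms(5,6) i
    unfolding subrelM_def by blast
qed

definition rank :: "nat \<Rightarrow> (nat \<Rightarrow> 'a nalg) \<Rightarrow> 'a list \<Rightarrow> nat" where
  "rank m A S = (\<Sum>j<m. card (below (A j) (S ! j)))"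

lemma rank_strict_mono:
  assumes ma: "multi_algebra m A P" and rel: "is_rel m A S" "is_rel m A T"
    and sub: "subrelM m A S T" and ne: "S \<noteq> T"
  shows "rank m A S < rank m A T"
  unfolding rank_def
proof (rule sum_strict_mono_ex1)
  have less_if_ne: "card (below (A k) (S ! k)) < card (below (A k) (T ! k))"
    if "k < m" "S ! k \<noteq> T ! k" for k
    using card_below_strict_mono[OF multi_algebra_fba[OF ma \<open>k < m\<close>]
        is_rel_nth[OF rel(1) \<open>k < m\<close>] is_rel_nth[OF rel(2) \<open>k < m\<close>]] that sub
    unfolding subrelM_def by blast
  then show "\<forall>k\<in>{..<m}. card (below (A k) (S ! k)) \<le> card (below (A k) (T ! k))"
    by (metis eq_refl less_imp_le lessThan_iff)
  obtain k where "k < m" "S ! k \<noteq> T ! k"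
    using ne rel nth_equalityI unfolding is_rel_def by metis
  then show "\<exists>k\<in>{..<m}. card (below (A k) (S ! k)) < card (below (A k) (T ! k))"
    using less_if_ne by blast
qed simp

definition proj_stable :: "nat \<Rightarrow> (nat \<Rightarrow> 'a nalg) \<Rightarrow> (nat \<Rightarrow> nat \<Rightarrow> 'a \<Rightarrow> 'a) \<Rightarrow> 'a list \<Rightarrow> bool" where
  "proj_stable m A P S \<longleftrightarrow> (\<forall>S'. proj_step m A P S S' \<longrightarrow> S' = S)"

lemma proj_step_shrinks:
  assumes ma: "multi_algebra m A P" and rel: "is_rel m A S" and step: "proj_step m A P S S'"
  shows "is_rel m A S' \<and> subrelM m A S' S"
proof -
  obtain i j where ij: "i < m" "j < m" "i \<noteq> j"
    and S': "S' = S[j := cap (A j) (S ! j) (P i j (S ! i))]"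
    using step unfolding proj_step_def by blast
  have fba: "finite_boolean_algebra (A j)"
    using multi_algebra_fba[OF ma ij(2)] .
  have carrier: "S ! j \<in> carrier (A j)" "P i j (S ! i) \<in> carrier (A j)"
    using is_rel_nth[OF rel] multi_algebra_proj_closed[OF ma ij] ij by auto
  have "is_rel m A S'"
    using rel S' ij fba_cap_closed[OF fba carrier] unfolding is_rel_def by (auto simp: nth_list_update)
  moreover have "subrelM m A S' S"
    using subrelM_refl[OF ma rel] cap_subrel_left[OF fba carrier] S' ij rel
    unfolding subrelM_def is_rel_def by (auto simp: nth_list_update)
  ultimately show ?thesis ..
qed

lemma proj_steps_shrink:
  assumes ma: "multi_algebra m A P" and steps: "(proj_step m A P)\<^sup>*\<^sup>* S S'" and rel: "is_rel m A S"
  shows "is_rel m A S' \<and> subrelM m A S' S"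
  using steps
proof (induction rule: rtranclp_induct)
  case base
  then show ?case using subrelM_refl[OF ma rel] rel by simp
next
  case (step S1 S2)
  then show ?case
    using proj_step_shrinks[OF ma] subrelM_trans[OF ma _ _ rel] by meson
qed

lemma proj_stable_reachable:
  assumes ma: "multi_algebra m A P"
  shows "is_rel m A S \<Longrightarrow> \<exists>T. (proj_step m A P)\<^sup>*\<^sup>* S T \<and> proj_stable m A P T"
proof (induction "rank m A S" arbitrary: S rule: less_induct)
  case less
  show ?case
  proof (cases "proj_stable m A P S")
    case False
    then obtain S' where S': "proj_step m A P S S'" "S' \<noteq> S"
      unfolding proj_stable_def by blast
    then have "is_rel m A S'" "rank m A S' < rank m A S"
      using proj_step_shrinks[OF ma less.prems] rank_strict_mono[OF ma] less.prems by blast+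
    then obtain T where "(proj_step m A P)\<^sup>*\<^sup>* S' T" "proj_stable m A P T"
      using less.hyps by blast
    then show ?thesis
      using S'(1) converse_rtranclp_into_rtranclp by metis
  qed blast
qed

lemma closed_proj_if_stable:
  assumes ma: "multi_algebra m A P" and rel: "is_rel m A S" and stable: "proj_stable m A P S"
  shows "closed_proj m A P S"
  unfolding closed_proj_def
proof (intro allI impI)
  fix i j assume ij: "i < m" "j < m" "i \<noteq> j"
  have "S[j := cap (A j) (S ! j) (P i j (S ! i))] = S"
    using stable ij unfolding proj_stable_def proj_step_def by blast
  then have "cap (A j) (S ! j) (P i j (S ! i)) = S ! j"
    using rel ij unfolding is_rel_def by (metis nth_list_update_eq)
  then show "subrel (A j) (S ! j) (P i j (S ! i))"
    using subrel_if_cap_eq[OF multi_algebra_fba[OF ma ij(2)]] is_rel_nth[OF rel]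
      multi_algebra_proj_closed[OF ma ij] ij by blast
qed

lemma proj_closure_props:
  assumes ma: "multi_algebra m A P" and rel: "is_rel m A R"
  shows is_rel_proj_closure: "is_rel m A (proj_closure m A P R)"
    and proj_closure_subrelM: "subrelM m A (proj_closure m A P R) R"
    and closed_proj_proj_closure: "closed_proj m A P (proj_closure m A P R)"
proof -
  have "(proj_step m A P)\<^sup>*\<^sup>* R (proj_closure m A P R) \<and> proj_stable m A P (proj_closure m A P R)"
    unfolding proj_closure_def proj_stable_def[symmetric]
    using proj_stable_reachable[OF ma rel] by (rule someI_ex)
  then show "is_rel m A (proj_closure m A P R)" "subrelM m A (proj_closure m A P R) R"
    "closed_proj m A P (proj_closure m A P R)"
    using proj_steps_shrink[OF ma _ rel] closed_proj_if_stable[OF ma] by blast+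
qed

lemma sequential_formalism_multi_algebra:
  assumes "sequential_formalism m A P U \<phi>"
  shows "multi_algebra m A P"
  using assms unfolding sequential_formalism_def by (elim conjE)

lemma sequential_formalism_proj_closure:
  assumes "sequential_formalism m A P U \<phi>" "is_rel m A R"
  shows "\<phi> (proj_closure m A P R) = \<phi> R"
proof -
  have "\<forall>R. is_rel m A R \<longrightarrow> \<phi> (proj_closure m A P R) = \<phi> R"
    using assms(1) unfolding sequential_formalism_def by (elim conjE)
  then show ?thesis using assms(2) by blast
qed

lemma sequential_formalism_basic_decomposition:
  assumes "sequential_formalism m A P U \<phi>" "is_rel m A R"
  shows "\<phi> R = (\<Union>B\<in>{B. is_basic m A B \<and> subrelM m A B R}. \<phi> B)"
proof -
  have "\<forall>R. is_rel m A R \<longrightarrow> \<phi> R = (\<Union>B\<in>{B. is_basic m A B \<and> subrelM m A B R}. \<phi> B)"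
    using assms(1) unfolding sequential_formalism_def by (elim conjE)
  then show ?thesis using assms(2) by blast
qed

lemma sequential_formalism_trivially_inconsistent:
  assumes sf: "sequential_formalism m A P U \<phi>" and rel: "is_rel m A S"
    and incons: "trivially_inconsistent m A S"
  shows "\<phi> S = {}"
proof -
  obtain i where i: "i < m" "S ! i = emp (A i)"
    using incons unfolding trivially_inconsistent_def by blast
  have fba: "finite_boolean_algebra (A i)"
    using multi_algebra_fba[OF sequential_formalism_multi_algebra[OF sf] i(1)] .
  have "\<not> (is_basic m A B \<and> subrelM m A B S)" for B
  proof
    assume "is_basic m A B \<and> subrelM m A B S"
    then have "is_atom (A i) (B ! i)" "subrel (A i) (B ! i) (S ! i)"
      using i(1) unfolding is_basic_def subrelM_def by simp_all
    then show False
      using subrel_emp_iff[OF fba] i(2) unfolding is_atom_def by auto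
  qed
  then show ?thesis
    using sequential_formalism_basic_decomposition[OF sf rel] by blast
qed

lemma eq_basic_if_subrelM_nonempty:
  assumes basic: "is_basic m A B" and rel: "is_rel m A C" and sub: "subrelM m A C B"
    and nonempty: "\<forall>i<m. C ! i \<noteq> emp (A i)"
  shows "C = B"
proof (rule nth_equalityI)
  show "length C = length B"
    using basic rel unfolding is_basic_def is_rel_def by simp
  fix i assume "i < length C"
  then have i: "i < m" using rel unfolding is_rel_def by simp
  then show "C ! i = B ! i"
    using basic sub nonempty is_rel_nth[OF rel i] unfolding is_basic_def is_atom_def subrelM_def
    by blast
qed

theorem proposition4p25:
  fixes m :: nat and A :: "nat \<Rightarrow> 'a nalg" and P :: "nat \<Rightarrow> nat \<Rightarrow> 'a \<Rightarrow> 'a"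
    and U :: "'u set" and \<phi> :: "'a list \<Rightarrow> ('u \<times> 'u) set" and R :: "'a list"
  assumes "sequential_formalism m A P U \<phi>"
    and "is_rel m A R"
  shows "(trivially_inconsistent m A (proj_closure m A P R) \<longrightarrow> \<phi> R = {})
       \<and> (\<phi> R \<noteq> {} \<longrightarrow> proj_consistent m A P (proj_closure m A P R))
       \<and> (\<forall>B. is_basic m A B \<longrightarrow> \<phi> B \<noteq> {} \<longrightarrow> proj_consistent m A P B)"
proof -
  have ma: "multi_algebra m A P"
    using assms(1) by (rule sequential_formalism_multi_algebra)
  have unsat: "\<phi> S = {}" if "is_rel m A S" "trivially_inconsistent m A (proj_closure m A P S)" for S
    using sequential_formalism_trivially_inconsistent[OF assms(1) is_rel_proj_closure[OF ma]]
      sequential_formalism_proj_closure[OF assms(1)] that by metis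
  have consistent: "proj_consistent m A P (proj_closure m A P S)"
    if "is_rel m A S" "\<phi> S \<noteq> {}" for S
    using unsat[of S] closed_proj_proj_closure[OF ma] that
    unfolding proj_consistent_def trivially_inconsistent_def by blast
  have "proj_consistent m A P B" if "is_basic m A B" "\<phi> B \<noteq> {}" for B
  proof -
    have "proj_closure m A P B = B"
      using eq_basic_if_subrelM_nonempty[OF that(1)] is_rel_if_basic[OF that(1)]
        is_rel_proj_closure[OF ma] proj_closure_subrelM[OF ma] consistent[OF _ that(2)]
      unfolding proj_consistent_def by blast
    then show ?thesis using consistent[OF is_rel_if_basic that(2)] that(1) by simp
  qed
  then show ?thesis using unsat[OF assms(2)] consistent[OF assms(2)] by blast
qed

end
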